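(* In the three-dimensional Poisson regression model with first-order interactions, $\mathbf{f}(\mathbf{x})^\top\boldsymbol{\beta}=\beta_0+\beta_1x_1+\beta_2x_2+\beta_3x_3+\beta_{12}x_1x_2+\beta_{13}x_1x_3+\beta_{23}x_2x_3$, let $\beta_0=0$, $\beta_1=\beta_2=\beta_3=-1$ and $\beta_{12}=\beta_{13}=\beta_{23}=0$. Then the design which assigns equal weights $1/7$ to the seven settings $(0,0,0)$, $(2,0,0)$, $(0,2,0)$, $(0,0,2)$, $(2,2,0)$, $(2,0,2)$, $(0,2,2)$ is locally $D$-optimal at $\boldsymbol{\beta}$ on $\mathcal{X}=[0,\infty)^3$.
   Context: An observation at $\mathbf{x}=(x_1,x_2,x_3)$ is Poisson distributed with mean $\lambda(\mathbf{x})=\exp(\mathbf{f}(\mathbf{x})^\top\boldsymbol{\beta})$ with $\mathbf{f}(\mathbf{x})=(1,x_1,x_2,x_3,x_1x_2,x_1x_3,x_2x_3)^\top$. A design $\xi$ is a finite collection of distinct settings $\mathbf{x}_i\in\mathcal{X}$ with weights $w_i\ge0$ summing to $1$; its information matrix is $\mathbf{M}_{\boldsymbol{\beta}}(\xi)=\sum_i w_i\lambda(\mathbf{x}_i)\mathbf{f}(\mathbf{x}_i)\mathbf{f}(\mathbf{x}_i)^\top$. A design is locally $D$-optimal at $\boldsymbol{\beta}$ on $\mathcal{X}$ if it maximizes $\det\mathbf{M}_{\boldsymbol{\beta}}(\xi)$ over all designs on $\mathcal{X}$. *)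

theory Defs
  imports "HOL-Analysis.Analysis"
begin

definition regf :: "real^3 \<Rightarrow> real^7" where
  "regf x = vector [1, x$1, x$2, x$3, x$1 * x$2, x$1 * x$3, x$2 * x$3]"

definition intensity :: "real^7 \<Rightarrow> real^3 \<Rightarrow> real" where
  "intensity \<beta> x = exp (regf x \<bullet> \<beta>)"

definition is_design :: "(real^3) set \<Rightarrow> (real^3) set \<Rightarrow> (real^3 \<Rightarrow> real) \<Rightarrow> bool" where
  "is_design X S w \<longleftrightarrow> finite S \<and> S \<subseteq> X \<and> (\<forall>x\<in>S. 0 \<le> w x) \<and> sum w S = 1"

definition info_matrix :: "real^7 \<Rightarrow> (real^3) set \<Rightarrow> (real^3 \<Rightarrow> real) \<Rightarrow> real^7^7" where
  "info_matrix \<beta> S w =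
     (\<Sum>x\<in>S. (w x * intensity \<beta> x) *\<^sub>R (\<chi> i j. regf x $ i * regf x $ j))"

definition locally_D_optimal :: "real^7 \<Rightarrow> (real^3) set \<Rightarrow> (real^3) set \<Rightarrow> (real^3 \<Rightarrow> real) \<Rightarrow> bool" where
  "locally_D_optimal \<beta> X S w \<longleftrightarrow> is_design X S w \<and>
     (\<forall>S' w'. is_design X S' w' \<longrightarrow> det (info_matrix \<beta> S' w') \<le> det (info_matrix \<beta> S w))"

end

theory Submission
  imports Defs
begin

(* The seven support points form a saturated design: if K is the inverse of the matrix with
   columns f(x_j), then l_j(x) = (K f(x))_j are the Lagrange polynomials of the support.
   Conjugation by K turns M(xi) into U = sum_x w_x lambda(x) l(x) l(x)^T.  By Hadamard's
   inequality det U is at most the product of the diagonal entries U_jj; the sensitivity bound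
   lambda(x) sum_j l_j(x)^2 / lambda(x_j) <= 1 on X gives sum_j U_jj / lambda(x_j) <= 1, so by
   AM-GM that product is at most prod_j lambda(x_j) / 7, the determinant of the conjugated
   information matrix of the equal-weight design.

   For the given beta, with t = x / 2, the sensitivity bound is an inequality between a
   polynomial of degree two in each t_i and exp (2 t_1) exp (2 t_2) exp (2 t_3).  It is proved
   one variable at a time from a criterion for a - 2 b t + c t^2 <= L exp (2 t) on t >= 0,
   which rests on three polynomial lower bounds for exp (2 t), the sharpest being the
   one-factor bound 1 - 2 t + (1 + e^2) t^2 <= exp (2 t). *)

definition pos_semidef :: "real^'n^'n \<Rightarrow> bool" where
  "pos_semidef U \<longleftrightarrow> (\<forall>x. 0 \<le> x \<bullet> (U *v x))"

lemma inner_axis_matrix_axis: "axis i a \<bullet> (U *v axis j b) = a * b * U$i$j"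
  for U :: "real^'n^'n"
proof -
  have "(U *v axis j b) $ i = U$i$j * b"
    by (simp add: matrix_vector_mult_def axis_def if_distrib cong: if_cong)
  then show ?thesis by (simp add: inner_axis')
qed

lemma pos_semidef_diag_nonneg: "pos_semidef U \<Longrightarrow> 0 \<le> U$i$i"
  unfolding pos_semidef_def using inner_axis_matrix_axis[of i 1 U i 1] by (metis mult_1)

lemma symmetric_matrix_entry: "transpose U = U \<Longrightarrow> U$i$j = U$j$i"
  by (metis transpose_def vec_lambda_beta)

lemma pos_semidef_zero_diag:
  assumes "pos_semidef U" "transpose U = U" "U$p$p = 0"
  shows "U$p$k = 0"
proof (rule ccontr)
  assume ne: "U$p$k \<noteq> 0"
  have "0 \<le> (axis p s + axis k 1) \<bullet> (U *v (axis p s + axis k 1))" for s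
    using assms(1) unfolding pos_semidef_def by blast
  then have "0 \<le> 2 * s * U$p$k + U$k$k" for s
    by (simp add: matrix_vector_right_distrib inner_add_left inner_add_right inner_axis_matrix_axis
        assms(3) symmetric_matrix_entry[OF assms(2), of p k] algebra_simps)
  from this[of "- (U$k$k + 1) / (2 * U$p$k)"] show False
    using ne by (simp add: field_simps)
qed

lemma pos_semidef_congruence:
  assumes "pos_semidef U"
  shows "pos_semidef (E ** U ** transpose E)"
  unfolding pos_semidef_def
proof
  fix x
  have "0 \<le> (x v* E) \<bullet> (U *v (x v* E))"
    using assms unfolding pos_semidef_def by blast
  then show "0 \<le> x \<bullet> ((E ** U ** transpose E) *v x)"
    by (simp add: matrix_vector_mul_assoc[symmetric] dot_lmul_matrix[symmetric])
qed

definition pivot_elim :: "'n \<Rightarrow> ('n \<Rightarrow> real) \<Rightarrow> real^'n^'n" where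
  "pivot_elim p c = (\<chi> i j. (if i = j then 1 else 0) - (if j = p \<and> i \<noteq> p then c i else 0))"

lemma pivot_elim_mult_nth:
  "(pivot_elim p c ** A) $ i $ l = A$i$l - (if i \<noteq> p then c i * A$p$l else 0)"
  for A :: "real^'m^'n"
proof -
  have "(pivot_elim p c ** A) $ i $ l = (\<Sum>k\<in>UNIV.
      ((if i = k then 1 else 0) - (if k = p \<and> i \<noteq> p then c i else 0)) * A$k$l)"
    by (simp add: matrix_matrix_mult_def pivot_elim_def)
  also have "\<dots> = (\<Sum>k\<in>UNIV. if i = k then A$k$l else 0)
      - (\<Sum>k\<in>UNIV. if k = p then (if i \<noteq> p then c i * A$k$l else 0) else 0)"
    by (subst sum_subtractf[symmetric], rule sum.cong) auto
  finally show ?thesis by simp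
qed

lemma mult_transpose_pivot_elim_nth:
  "(A ** transpose (pivot_elim p c)) $ i $ j = A$i$j - (if j \<noteq> p then c j * A$i$p else 0)"
  for A :: "real^'n^'m"
proof -
  have "A ** transpose (pivot_elim p c) = transpose (pivot_elim p c ** transpose A)"
    by (simp add: matrix_transpose_mul)
  then show ?thesis by (simp add: transpose_def pivot_elim_mult_nth)
qed

lemma det_pivot_elim: "det (pivot_elim p c) = 1"
proof -
  let ?I = "mat 1 :: real^'n^'n"
  define x where "x = - (\<Sum>j\<in>UNIV - {p}. c j *s row j ?I)"
  have x_span: "x \<in> vec.span {row j ?I |j. j \<noteq> p}"
    unfolding x_def by (intro vec.span_neg vec.span_sum vec.span_scale vec.span_base) auto
  have "x $ j = - (if j \<noteq> p then c j else 0)" for j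
    unfolding x_def by (simp add: sum_component row_def mat_def if_distrib cong: if_cong)
  then have "transpose (pivot_elim p c) = (\<chi> k. if k = p then row p ?I + x else row k ?I)"
    by (auto simp: vec_eq_iff transpose_def pivot_elim_def row_def mat_def)
  then have "det (transpose (pivot_elim p c)) = det ?I"
    using det_row_span[OF x_span] by simp
  then show ?thesis by simp
qed

lemma pivot_elim_zero: "pivot_elim p (\<lambda>_. 0) = mat 1"
  by (simp add: pivot_elim_def mat_def vec_eq_iff)

definition schur_step :: "real^'n^'n \<Rightarrow> 'n \<Rightarrow> real^'n^'n" where
  "schur_step U p =
     pivot_elim p (\<lambda>i. U$i$p / U$p$p) ** U ** transpose (pivot_elim p (\<lambda>i. U$i$p / U$p$p))"

lemma det_schur_step: "det (schur_step U p) = det U"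
  by (simp add: schur_step_def det_mul det_pivot_elim)

lemma transpose_schur_step: "transpose U = U \<Longrightarrow> transpose (schur_step U p) = schur_step U p"
  by (simp add: schur_step_def matrix_transpose_mul matrix_mul_assoc)

lemma pos_semidef_schur_step: "pos_semidef U \<Longrightarrow> pos_semidef (schur_step U p)"
  unfolding schur_step_def by (rule pos_semidef_congruence)

text \<open>If \<open>U$p$p = 0\<close> then row \<open>p\<close> vanishes, so the junk value \<open>x / 0 = 0\<close> gives the right formula.\<close>
lemma schur_step_nth:
  assumes "transpose U = U" "pos_semidef U"
  shows "schur_step U p $ i $ j =
    (if i = p \<or> j = p then (if i = j then U$p$p else 0) else U$i$j - U$i$p * U$p$j / U$p$p)"
proof (cases "U$p$p = 0")
  case True
  then have that: "U$p$k = 0" "U$k$p = 0" for k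
    using pos_semidef_zero_diag[OF assms(2,1)] symmetric_matrix_entry[OF assms(1)] by metis+
  moreover have "(\<lambda>i. U$i$p / U$p$p) = (\<lambda>_. 0)" using True by simp
  then have "schur_step U p = U" by (simp add: schur_step_def pivot_elim_zero)
  ultimately show ?thesis using that[of i] that[of j] True by auto
next
  case False
  then show ?thesis
    by (simp add: schur_step_def mult_transpose_pivot_elim_nth pivot_elim_mult_nth
        symmetric_matrix_entry[OF assms(1), of p i] symmetric_matrix_entry[OF assms(1), of p j]
        field_simps)
qed

lemma hadamard_ineq_partial:
  fixes U :: "real^'n^'n"
  assumes "finite R" "transpose U = U" "pos_semidef U"
    and "\<And>q k. q \<notin> R \<Longrightarrow> k \<noteq> q \<Longrightarrow> U$q$k = 0"
  shows "det U \<le> (\<Prod>i\<in>UNIV. U$i$i)"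
  using assms
proof (induction R arbitrary: U rule: finite_induct)
  case empty
  then show ?case by (simp add: det_diagonal)
next
  case (insert p R)
  let ?V = "schur_step U p"
  have "det ?V \<le> (\<Prod>i\<in>UNIV. ?V$i$i)"
  proof (rule insert.IH)
    show "transpose ?V = ?V" by (rule transpose_schur_step[OF insert.prems(1)])
    show "pos_semidef ?V" by (rule pos_semidef_schur_step[OF insert.prems(2)])
    show "?V$q$k = 0" if "q \<notin> R" "k \<noteq> q" for q k
      using that insert.prems(3)[of q p] insert.prems(3)[of q k]
      by (auto simp: schur_step_nth[OF insert.prems(1,2)])
  qed
  also have "\<dots> \<le> (\<Prod>i\<in>UNIV. U$i$i)"
  proof (rule prod_mono)
    fix i
    have "0 \<le> U$p$p" by (rule pos_semidef_diag_nonneg[OF insert.prems(2)])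
    then have "0 \<le> U$i$p * U$p$i / U$p$p"
      using symmetric_matrix_entry[OF insert.prems(1), of p i] by simp
    then show "0 \<le> ?V$i$i \<and> ?V$i$i \<le> U$i$i"
      using pos_semidef_diag_nonneg[OF pos_semidef_schur_step[OF insert.prems(2)]]
      by (auto simp: schur_step_nth[OF insert.prems(1,2)])
  qed
  finally show ?case by (simp add: det_schur_step)
qed

lemma hadamard_ineq:
  fixes U :: "real^'n^'n"
  assumes "transpose U = U" "pos_semidef U"
  shows "det U \<le> (\<Prod>i\<in>UNIV. U$i$i)"
  using hadamard_ineq_partial[of UNIV U] assms by simp

definition outer :: "real^'n \<Rightarrow> real^'n^'n" where
  "outer v = (\<chi> i j. v$i * v$j)"

lemma congruence_outer: "A ** outer v ** transpose A = outer (A *v v)"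
  for A :: "real^'n^'m"
proof -
  have "(\<Sum>l\<in>UNIV. (\<Sum>k\<in>UNIV. A$i$k * (v$k * v$l)) * A$j$l)
      = (\<Sum>k\<in>UNIV. A$i$k * v$k) * (\<Sum>l\<in>UNIV. A$j$l * v$l)" for i j
  proof -
    have "(\<Sum>l\<in>UNIV. (\<Sum>k\<in>UNIV. A$i$k * (v$k * v$l)) * A$j$l)
        = (\<Sum>l\<in>UNIV. \<Sum>k\<in>UNIV. A$i$k * v$k * (A$j$l * v$l))"
      unfolding sum_distrib_right by (simp add: mult_ac)
    also have "\<dots> = (\<Sum>k\<in>UNIV. \<Sum>l\<in>UNIV. A$i$k * v$k * (A$j$l * v$l))"
      by (rule sum.swap)
    also have "\<dots> = (\<Sum>k\<in>UNIV. A$i$k * v$k) * (\<Sum>l\<in>UNIV. A$j$l * v$l)"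
      by (simp add: sum_product)
    finally show ?thesis .
  qed
  then show ?thesis
    by (simp add: vec_eq_iff outer_def matrix_matrix_mult_def matrix_vector_mult_def transpose_def)
qed

lemma matrix_add_rdistrib: "(B + C) ** A = B ** A + C ** A"
  for A :: "real^'k^'m" and B C :: "real^'m^'n"
  by (simp add: vec_eq_iff matrix_matrix_mult_def sum.distrib distrib_right)

lemma congruence_sum_outer:
  fixes A :: "real^'n^'m"
  assumes "finite S"
  shows "A ** (\<Sum>x\<in>S. a x *\<^sub>R outer (v x)) ** transpose A = (\<Sum>x\<in>S. a x *\<^sub>R outer (A *v v x))"
  using assms
proof (induction S rule: finite_induct)
  case empty
  then show ?case by (simp add: vec_eq_iff matrix_matrix_mult_def)
next
  case (insert x S)
  have "A ** (a x *\<^sub>R outer (v x) + (\<Sum>x\<in>S. a x *\<^sub>R outer (v x))) ** transpose A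
     = a x *\<^sub>R (A ** outer (v x) ** transpose A) + A ** (\<Sum>x\<in>S. a x *\<^sub>R outer (v x)) ** transpose A"
    by (simp add: matrix_add_ldistrib matrix_add_rdistrib matrix_scalar_ac scalar_matrix_assoc)
  with insert show ?case by (simp add: congruence_outer)
qed

lemma transpose_sum_outer: "transpose (\<Sum>x\<in>S. a x *\<^sub>R outer (v x)) = (\<Sum>x\<in>S. a x *\<^sub>R outer (v x))"
  by (simp add: vec_eq_iff transpose_def outer_def mult.commute)

lemma pos_semidef_sum_outer:
  fixes v :: "'a \<Rightarrow> real^'n"
  assumes "\<And>x. x \<in> S \<Longrightarrow> 0 \<le> a x"
  shows "pos_semidef (\<Sum>x\<in>S. a x *\<^sub>R outer (v x))"
  unfolding pos_semidef_def
proof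
  fix y :: "real^'n"
  have "y \<bullet> ((\<Sum>x\<in>S. a x *\<^sub>R outer (v x)) *v y) = (\<Sum>x\<in>S. a x * (y \<bullet> v x)^2)"
    by (simp add: inner_vec_def matrix_vector_mult_def outer_def power2_eq_square sum_product
        sum_distrib_left sum_distrib_right sum.swap[of _ S] mult_ac)
  also have "\<dots> \<ge> 0" using assms by (intro sum_nonneg) auto
  finally show "0 \<le> y \<bullet> ((\<Sum>x\<in>S. a x *\<^sub>R outer (v x)) *v y)" .
qed

lemma sum_outer_axis_nth:
  "(\<Sum>i\<in>UNIV. c i *\<^sub>R outer (axis i (1::real))) $ j $ k = (if j = k then c j else 0)"
proof -
  have "c i * (axis i 1 $ j * axis i 1 $ k) = (if i = j then (if j = k then c j else 0) else 0)" for i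
    by (auto simp: axis_def)
  then show ?thesis by (simp add: outer_def)
qed

lemma det_sum_outer_axis: "det (\<Sum>i\<in>UNIV. c i *\<^sub>R outer (axis i (1::real))) = (\<Prod>i\<in>UNIV. c i)"
proof -
  have "det (\<Sum>i\<in>UNIV. c i *\<^sub>R outer (axis i (1::real)))
      = (\<Prod>i\<in>UNIV. (\<Sum>i\<in>UNIV. c i *\<^sub>R outer (axis i (1::real))) $ i $ i)"
    by (rule det_diagonal) (simp only: sum_outer_axis_nth, simp)
  then show ?thesis by (simp only: sum_outer_axis_nth, simp)
qed

lemma prod_le_inverse_card_power:
  fixes u :: "'a \<Rightarrow> real"
  assumes "finite S" "S \<noteq> {}" "\<And>i. i \<in> S \<Longrightarrow> 0 \<le> u i" "sum u S \<le> 1"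
  shows "prod u S \<le> (1 / card S) ^ card S"
proof -
  have "prod u S powr (1 / card S) \<le> sum u S / card S"
    using arith_geom_mean[OF assms(1-3)] by (simp add: sum_divide_distrib)
  also have "\<dots> \<le> 1 / card S"
    using assms(4) by (simp add: divide_right_mono)
  finally have "(prod u S powr (1 / card S)) ^ card S \<le> (1 / card S) ^ card S"
    by (intro power_mono) auto
  moreover have "(prod u S powr (1 / card S)) ^ card S = prod u S"
  proof (cases "prod u S = 0")
    case False
    then have "0 < prod u S" using assms(3) by (simp add: prod_nonneg order_less_le)
    then have "(prod u S powr (1 / card S)) ^ card S = (prod u S powr (1 / card S)) powr card S"
      by (simp add: powr_realpow)
    also have "\<dots> = prod u S"
      using assms by (simp add: powr_powr prod_nonneg)
    finally show ?thesis .
  next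
    case True
    have "card S \<noteq> 0" using assms(1,2) by simp
    then show ?thesis unfolding True by simp
  qed
  ultimately show ?thesis by simp
qed

lemma det_le_prod_of_weighted_trace_le_1:
  fixes U :: "real^'n^'n"
  assumes "transpose U = U" "pos_semidef U" "\<And>j. 0 < \<mu> j"
    and trace: "(\<Sum>j\<in>UNIV. U$j$j / \<mu> j) \<le> 1"
  shows "det U \<le> (\<Prod>j\<in>UNIV. \<mu> j / CARD('n))"
proof -
  have "(\<Prod>j\<in>UNIV. U$j$j / \<mu> j) \<le> (1 / CARD('n)) ^ CARD('n)"
    using prod_le_inverse_card_power[of UNIV "\<lambda>j. U$j$j / \<mu> j"] trace
      pos_semidef_diag_nonneg[OF assms(2)] assms(3) by (simp add: less_imp_le)
  then have "(\<Prod>j\<in>UNIV. \<mu> j) * (\<Prod>j\<in>UNIV. U$j$j / \<mu> j) \<le> (\<Prod>j\<in>UNIV. \<mu> j) * (1 / CARD('n)) ^ CARD('n)"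
    using assms(3) by (intro mult_left_mono prod_nonneg) (auto intro: less_imp_le)
  moreover have "(\<Prod>j\<in>UNIV. \<mu> j) * (\<Prod>j\<in>UNIV. U$j$j / \<mu> j) = (\<Prod>j\<in>UNIV. U$j$j)"
    using assms(3) by (simp add: prod.distrib[symmetric] less_imp_neq[symmetric])
  moreover have "(\<Prod>j\<in>UNIV. \<mu> j) * (1 / CARD('n)) ^ CARD('n) = (\<Prod>j\<in>UNIV. \<mu> j / CARD('n))"
    by (simp add: prod_dividef power_one_over)
  ultimately show ?thesis
    using hadamard_ineq[OF assms(1,2)] by linarith
qed

lemma lagrange_matrix_det_nonzero:
  fixes K :: "real^'n^'n" and f :: "'a \<Rightarrow> real^'n"
  assumes "\<And>j. K *v f (p j) = axis j 1"
  shows "det K \<noteq> 0"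
proof -
  have "(K ** (\<chi> i j. f (p j) $ i)) $ i $ j = (K *v f (p j)) $ i" for i j
    by (simp add: matrix_matrix_mult_def matrix_vector_mult_def)
  then have "K ** (\<chi> i j. f (p j) $ i) = mat 1"
    by (simp add: vec_eq_iff assms mat_def axis_def)
  then have "det K * det (\<chi> i j. f (p j) $ i) = 1" by (metis det_I det_mul)
  then show ?thesis by auto
qed

theorem saturated_design_D_optimal:
  fixes f :: "'a \<Rightarrow> real^'n" and lam w :: "'a \<Rightarrow> real" and p :: "'n \<Rightarrow> 'a" and K :: "real^'n^'n"
  assumes lagrange: "\<And>j. K *v f (p j) = axis j 1"
    and lam_pos: "\<And>x. x \<in> X \<Longrightarrow> 0 < lam x"
    and support: "range p \<subseteq> X"
    and sensitivity: "\<And>x. x \<in> X \<Longrightarrow> lam x * (\<Sum>j\<in>UNIV. (K *v f x)$j ^ 2 / lam (p j)) \<le> 1"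
    and design: "finite S" "S \<subseteq> X" "\<And>x. x \<in> S \<Longrightarrow> 0 \<le> w x" "sum w S = 1"
  shows "det (\<Sum>x\<in>S. (w x * lam x) *\<^sub>R outer (f x))
       \<le> det (\<Sum>x\<in>range p. (1 / CARD('n) * lam x) *\<^sub>R outer (f x))"
proof -
  define U where "U = K ** (\<Sum>x\<in>S. (w x * lam x) *\<^sub>R outer (f x)) ** transpose K"
  have lam_p: "0 < lam (p j)" for j
    using lam_pos support by auto
  have "inj p"
    using lagrange by (metis axis_eq_axis injI zero_neq_one)
  have U_eq: "U = (\<Sum>x\<in>S. (w x * lam x) *\<^sub>R outer (K *v f x))"
    unfolding U_def by (rule congruence_sum_outer[OF design(1)])
  have "(\<Sum>j\<in>UNIV. U$j$j / lam (p j))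
      = (\<Sum>x\<in>S. w x * (lam x * (\<Sum>j\<in>UNIV. (K *v f x)$j ^ 2 / lam (p j))))"
    by (simp add: U_eq outer_def power2_eq_square sum_divide_distrib sum_distrib_left
        sum.swap[of _ UNIV] mult_ac)
  also have "\<dots> \<le> (\<Sum>x\<in>S. w x)"
    using design sensitivity by (intro sum_mono) (auto intro: mult_left_le)
  moreover have "0 \<le> w x * lam x" if "x \<in> S" for x
    using that design lam_pos[of x] by auto
  ultimately have "det U \<le> (\<Prod>j\<in>UNIV. lam (p j) / CARD('n))"
    using lam_p design(4) unfolding U_eq
    by (intro det_le_prod_of_weighted_trace_le_1 transpose_sum_outer pos_semidef_sum_outer) auto
  also have "\<dots> = det (K ** (\<Sum>x\<in>range p. (1 / CARD('n) * lam x) *\<^sub>R outer (f x)) ** transpose K)"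
    by (simp add: congruence_sum_outer sum.reindex[OF \<open>inj p\<close>] lagrange det_sum_outer_axis)
  finally have "det K ^ 2 * det (\<Sum>x\<in>S. (w x * lam x) *\<^sub>R outer (f x))
      \<le> det K ^ 2 * det (\<Sum>x\<in>range p. (1 / CARD('n) * lam x) *\<^sub>R outer (f x))"
    by (simp add: U_def det_mul power2_eq_square mult_ac)
  then show ?thesis
    using lagrange_matrix_det_nonzero[of K f p, OF lagrange] by simp
qed

lemma exp2_bounds: "738/100 \<le> exp (2::real)" "exp (2::real) \<le> 74/10"
proof -
  have e: "2718/1000 \<le> exp (1::real)" "exp (1::real) \<le> 2719/1000"
    using e_approx_32 by (simp_all add: abs_if split: if_split_asm)
  have "exp (2::real) = exp 1 ^ 2"
    by (simp add: power2_eq_square flip: exp_add)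
  moreover have "(2718/1000)^2 \<le> exp (1::real) ^ 2" "exp (1::real) ^ 2 \<le> (2719/1000)^2"
    using e by (intro power_mono; simp)+
  ultimately show "738/100 \<le> exp (2::real)" "exp (2::real) \<le> 74/10"
    by (simp_all add: power2_eq_square)
qed

lemma exp_ge_cubic_taylor: "1 + x + x^2/2 + x^3/6 \<le> exp (x::real)"
proof -
  obtain \<xi> where "exp x = (\<Sum>m<4. x ^ m / fact m) + exp \<xi> / fact 4 * x ^ 4"
    using Maclaurin_exp_le[of x 4] by blast
  moreover have "(\<Sum>m<4. x ^ m / fact m) = 1 + x + x^2/2 + x^3/6"
    by (simp add: eval_nat_numeral fact_numeral)
  moreover have "0 \<le> exp \<xi> / fact 4 * x ^ 4" by simp
  ultimately show ?thesis by linarith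
qed

lemma exp_2t_ge_taylor: "0 \<le> t \<Longrightarrow> 1 + 2*t + 2*t^2 \<le> exp (2*t::real)"
  using exp_lower_Taylor_quadratic[of "2*t"] by (simp add: power2_eq_square)

lemma exp_2t_ge_even:
  assumes "0 \<le> t"
  shows "1 + 21/4*t^2 \<le> exp (2*t::real)"
proof -
  have "1 + 2*t + 2*t^2 + 4/3*t^3 \<le> exp (2*t)"
    using exp_ge_cubic_taylor[of "2*t"] by (simp add: power2_eq_square power3_eq_cube algebra_simps)
  moreover have "0 \<le> t * (4/3*(t - 39/32)^2 + (2 - 4/3*(39/32)^2))"
    using assms by (intro mult_nonneg_nonneg add_nonneg_nonneg) (auto simp: power2_eq_square)
  then have "0 \<le> 2*t - 13/4*t^2 + 4/3*t^3"
    by (simp add: power2_eq_square power3_eq_cube algebra_simps)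
  ultimately show ?thesis by linarith
qed

text \<open>The one-factor case of the theorem: the design on \<open>{0, 2}\<close> for \<open>exp (- x)\<close>, with \<open>t = x / 2\<close>.\<close>
lemma exp_2t_ge_sensitivity_1d:
  assumes "0 \<le> t"
  shows "1 - 2*t + (1 + exp 2)*t^2 \<le> exp (2*t::real)"
proof (cases "t \<le> 3/5")
  case True
  have "(exp 2 - 1)*t \<le> (64/10)*(3/5)"
    using exp2_bounds True assms by (intro mult_mono) auto
  then have "0 \<le> t * (4 - (exp 2 - 1)*t)"
    using assms by (intro mult_nonneg_nonneg) auto
  moreover have "1 - 2*t + (1 + exp 2)*t^2 = (1 + 2*t + 2*t^2) - t * (4 - (exp 2 - 1)*t)"
    by (simp add: power2_eq_square algebra_simps)
  ultimately show ?thesis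
    using exp_2t_ge_taylor[OF assms] by linarith
next
  case False
  define u where "u = t - 1"
  have "exp (2*t) = exp 2 * exp (2*u)"
    by (simp add: u_def algebra_simps flip: exp_add)
  moreover have "1 + 2*u + 2*u^2 + 4/3*u^3 \<le> exp (2*u)"
    using exp_ge_cubic_taylor[of "2*u"] by (simp add: power2_eq_square power3_eq_cube algebra_simps)
  ultimately have "exp 2 * (1 + 2*u + 2*u^2 + 4/3*u^3) \<le> exp (2*t)"
    by simp
  moreover have "0 \<le> exp 2 - 1 + 4/3 * exp 2 * u"
    using exp2_bounds False mult_left_mono[of "-2/5" u "exp 2"] by (simp add: u_def)
  then have "0 \<le> u^2 * (exp 2 - 1 + 4/3 * exp 2 * u)"
    by simp
  moreover have "exp 2 * (1 + 2*u + 2*u^2 + 4/3*u^3) - (1 - 2*t + (1 + exp 2)*t^2)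
      = u^2 * (exp 2 - 1 + 4/3 * exp 2 * u)"
    by (simp add: u_def power2_eq_square power3_eq_cube field_simps)
  ultimately show ?thesis by linarith
qed

definition quadratic :: "real \<Rightarrow> real \<Rightarrow> real \<Rightarrow> real \<Rightarrow> real" where
  "quadratic a b c t = a - 2 * b * t + c * t^2"

lemma quadratic_diff:
  "quadratic a b c t - k * quadratic a' b' c' t = quadratic (a - k * a') (b - k * b') (c - k * c') t"
  by (simp add: quadratic_def algebra_simps)

lemma quadratic_uminus: "- quadratic a b c t = quadratic (- a) (- b) (- c) t"
  by (simp add: quadratic_def)

text \<open>\<open>L exp (2 t) - quadratic a b c t\<close> is a nonnegative combination of the gaps in
  the three lower bounds for \<open>exp (2 t)\<close> above, of \<open>t^2\<close> and of \<open>1\<close>.\<close>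
lemma quadratic_le_exp:
  assumes "0 \<le> t" "a \<le> L" "b \<le> L" "- b \<le> L"
    and "c - (exp 2 - 17/4) * b \<le> 21/4 * L" "c - 13/4 * b \<le> 21/4 * L"
  shows "quadratic a b c t \<le> L * exp (2 * t)"
proof (cases "0 \<le> b")
  case True
  have "0 \<le> (L - b) * (exp (2*t) - (1 + 21/4*t^2))"
    using assms exp_2t_ge_even[OF assms(1)] by (intro mult_nonneg_nonneg) auto
  moreover have "0 \<le> b * (exp (2*t) - (1 - 2*t + (1 + exp 2)*t^2))"
    using True exp_2t_ge_sensitivity_1d[OF assms(1)] by (intro mult_nonneg_nonneg) auto
  moreover have "0 \<le> (21/4 * L - (c - (exp 2 - 17/4)*b)) * t^2"
    using assms by (intro mult_nonneg_nonneg) auto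
  moreover have "L * exp (2*t) - quadratic a b c t
      = (L - b) * (exp (2*t) - (1 + 21/4*t^2)) + b * (exp (2*t) - (1 - 2*t + (1 + exp 2)*t^2))
        + (21/4 * L - (c - (exp 2 - 17/4)*b)) * t^2 + (L - a)"
    by (simp add: quadratic_def field_simps)
  ultimately show ?thesis using assms(2) by linarith
next
  case False
  have "0 \<le> (L + b) * (exp (2*t) - (1 + 21/4*t^2))"
    using assms exp_2t_ge_even[OF assms(1)] by (intro mult_nonneg_nonneg) auto
  moreover have "0 \<le> (- b) * (exp (2*t) - (1 + 2*t + 2*t^2))"
    using False exp_2t_ge_taylor[OF assms(1)] by (intro mult_nonneg_nonneg) auto
  moreover have "0 \<le> (21/4 * L - (c - 13/4*b)) * t^2"
    using assms by (intro mult_nonneg_nonneg) auto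
  moreover have "L * exp (2*t) - quadratic a b c t
      = (L + b) * (exp (2*t) - (1 + 21/4*t^2)) + (- b) * (exp (2*t) - (1 + 2*t + 2*t^2))
        + (21/4 * L - (c - 13/4*b)) * t^2 + (L - a)"
    by (simp add: quadratic_def field_simps)
  ultimately show ?thesis using assms(2) by linarith
qed

text \<open>As a quadratic in \<open>t3\<close> the left-hand side has the coefficients \<open>A1 A2\<close>, \<open>A1 A2 - b1 b2\<close>
  and \<open>Q (A1 A2 - 2 b1 b2 + c1 c2)\<close>, where \<open>Q = 1 + exp 2\<close>, \<open>Ai = 1 - 2 ti + Q ti^2\<close>,
  \<open>bi = ti - Q ti^2\<close> and \<open>ci = Q ti^2\<close>; expanding them in \<open>t2\<close> and then \<open>t1\<close> gives the nested form.\<close>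
lemma lagrange_sum_le_exp:
  fixes t1 t2 t3 :: real
  assumes t: "0 \<le> t1" "0 \<le> t2" "0 \<le> t3"
  shows "(1 - t1 - t2 - t3 + t1*t2 + t1*t3 + t2*t3)^2
     + exp 2 * ((t1 - t1*t2 - t1*t3)^2 + (t2 - t1*t2 - t2*t3)^2 + (t3 - t1*t3 - t2*t3)^2)
     + exp 2 ^ 2 * ((t1*t2)^2 + (t1*t3)^2 + (t2*t3)^2)
     \<le> exp (2*t1) * exp (2*t2) * exp (2*t3)"
proof -
  define Q where "Q = 1 + exp (2::real)"
  have "(1 - t1 - t2 - t3 + t1*t2 + t1*t3 + t2*t3)^2
     + exp 2 * ((t1 - t1*t2 - t1*t3)^2 + (t2 - t1*t2 - t2*t3)^2 + (t3 - t1*t3 - t2*t3)^2)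
     + exp 2 ^ 2 * ((t1*t2)^2 + (t1*t3)^2 + (t2*t3)^2) = quadratic
       (quadratic (quadratic 1 1 Q t1) (quadratic 1 1 Q t1) (quadratic Q Q (Q^2) t1) t2)
       (quadratic (quadratic 1 1 Q t1) (quadratic 1 (3/4) (Q/2) t1) (quadratic Q (Q/2) 0 t1) t2)
       (quadratic (quadratic Q Q (Q^2) t1) (quadratic Q (Q/2) 0 t1) (quadratic (Q^2) 0 0 t1) t2) t3"
    by (simp add: quadratic_def Q_def power2_eq_square field_simps)
  also have "\<dots> \<le> 1 * exp (2*t1) * exp (2*t2) * exp (2*t3)"
  proof -
    have "(738/100)^k \<le> exp (2::real)^k" "exp (2::real)^k \<le> (74/10)^k" for k
      using exp2_bounds by (intro power_mono; simp)+
    note bounds = this[of 2] this[of 3] exp2_bounds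
    (* Between rule applications, the side conditions are folded back into single quadratics
       in the next variable and the constant factors are moved onto L; what finally remains
       are numerical inequalities in e^2. *)
    note regroup = quadratic_diff quadratic_uminus mult.assoc[symmetric]
    show ?thesis
      unfolding Q_def
      apply (rule quadratic_le_exp[OF t(3)]; (simp only: regroup)?;
          rule quadratic_le_exp[OF t(2)]; (simp only: regroup)?; rule quadratic_le_exp[OF t(1)])
      using bounds by (simp_all add: field_simps power2_eq_square power3_eq_cube)
  qed
  finally show ?thesis by simp
qed

lemma exhaust_7:
  fixes x :: 7
  shows "x = 1 \<or> x = 2 \<or> x = 3 \<or> x = 4 \<or> x = 5 \<or> x = 6 \<or> x = 7"
proof (induct x)
  case (of_int z)
  then have "z = 0 \<or> z = 1 \<or> z = 2 \<or> z = 3 \<or> z = 4 \<or> z = 5 \<or> z = 6" by fastforce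
  then show ?case by auto
qed

lemma forall_7: "(\<forall>i::7. P i) \<longleftrightarrow> P 1 \<and> P 2 \<and> P 3 \<and> P 4 \<and> P 5 \<and> P 6 \<and> P 7"
  by (metis exhaust_7)

lemma UNIV_7: "UNIV = {1, 2, 3, 4, 5, 6, 7::7}"
  using exhaust_7 by auto

lemma sum_7: "sum f (UNIV::7 set) = f 1 + f 2 + f 3 + f 4 + f 5 + f 6 + f 7"
  unfolding UNIV_7 by (simp add: ac_simps)

lemma vector_7 [simp]:
  "(vector [x1, x2, x3, x4, x5, x6, x7] :: 'a::zero^7) $ 1 = x1"
  "(vector [x1, x2, x3, x4, x5, x6, x7] :: 'a::zero^7) $ 2 = x2"
  "(vector [x1, x2, x3, x4, x5, x6, x7] :: 'a::zero^7) $ 3 = x3"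
  "(vector [x1, x2, x3, x4, x5, x6, x7] :: 'a::zero^7) $ 4 = x4"
  "(vector [x1, x2, x3, x4, x5, x6, x7] :: 'a::zero^7) $ 5 = x5"
  "(vector [x1, x2, x3, x4, x5, x6, x7] :: 'a::zero^7) $ 6 = x6"
  "(vector [x1, x2, x3, x4, x5, x6, x7] :: 'a::zero^7) $ 7 = x7"
  unfolding vector_def by simp_all

definition beta_star :: "real^7" where
  "beta_star = vector [0, -1, -1, -1, 0, 0, 0]"

definition design_point :: "7 \<Rightarrow> real^3" where
  "design_point j =
     (if j = 1 then vector [0, 0, 0] else if j = 2 then vector [2, 0, 0] else
      if j = 3 then vector [0, 2, 0] else if j = 4 then vector [0, 0, 2] else
      if j = 5 then vector [2, 2, 0] else if j = 6 then vector [2, 0, 2] else vector [0, 2, 2])"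

text \<open>Row \<open>j\<close> holds the coefficients, with respect to \<^const>\<open>regf\<close>, of the Lagrange polynomial
  that is \<open>1\<close> at \<open>design_point j\<close> and \<open>0\<close> at the other six points.\<close>
definition lagrange_matrix :: "real^7^7" where
  "lagrange_matrix =
     vector [vector [1, -1/2, -1/2, -1/2, 1/4, 1/4, 1/4],
             vector [0, 1/2, 0, 0, -1/4, -1/4, 0],
             vector [0, 0, 1/2, 0, -1/4, 0, -1/4],
             vector [0, 0, 0, 1/2, 0, -1/4, -1/4],
             vector [0, 0, 0, 0, 1/4, 0, 0],
             vector [0, 0, 0, 0, 0, 1/4, 0],
             vector [0, 0, 0, 0, 0, 0, 1/4]]"

lemma design_point_simps:
  "design_point 1 = vector [0, 0, 0]" "design_point 2 = vector [2, 0, 0]"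
  "design_point 3 = vector [0, 2, 0]" "design_point 4 = vector [0, 0, 2]"
  "design_point 5 = vector [2, 2, 0]" "design_point 6 = vector [2, 0, 2]"
  "design_point 7 = vector [0, 2, 2]"
  by (simp_all add: design_point_def)

lemma range_design_point:
  "range design_point = {vector [0, 0, 0], vector [2, 0, 0], vector [0, 2, 0], vector [0, 0, 2],
     vector [2, 2, 0], vector [2, 0, 2], vector [0, 2, 2]}"
  by (simp add: UNIV_7 design_point_simps)

lemma lagrange_matrix_regf:
  fixes y :: "real^3"
  defines "t1 \<equiv> y$1 / 2" and "t2 \<equiv> y$2 / 2" and "t3 \<equiv> y$3 / 2"
  shows "lagrange_matrix *v regf y = vector [1 - t1 - t2 - t3 + t1*t2 + t1*t3 + t2*t3,
     t1 - t1*t2 - t1*t3, t2 - t1*t2 - t2*t3, t3 - t1*t3 - t2*t3, t1*t2, t1*t3, t2*t3]"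
  unfolding vec_eq_iff forall_7
  by (simp add: matrix_vector_mult_def sum_7 lagrange_matrix_def regf_def t1_def t2_def t3_def
      field_simps)

lemma lagrange_matrix_design_point: "lagrange_matrix *v regf (design_point j) = axis j 1"
  unfolding vec_eq_iff
  using exhaust_7[of j] by (auto simp: forall_7 lagrange_matrix_regf design_point_simps axis_def)

lemma intensity_beta_star: "intensity beta_star y = exp (- (y$1 + y$2 + y$3))"
  by (simp add: intensity_def inner_vec_def sum_7 regf_def beta_star_def)

lemma sensitivity_beta_star:
  fixes y :: "real^3"
  assumes "\<forall>i. 0 \<le> y$i"
  shows "intensity beta_star y * (\<Sum>j\<in>UNIV. (lagrange_matrix *v regf y)$j ^ 2
           / intensity beta_star (design_point j)) \<le> 1"
proof -
  define t1 t2 t3 where "t1 = y$1 / 2" and "t2 = y$2 / 2" and "t3 = y$3 / 2"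
  have "x / exp (-2) = exp 2 * x" and "x / exp (-4) = exp 2 ^ 2 * x" for x :: real
    by (simp_all add: exp_minus divide_inverse mult.commute flip: exp_of_nat_mult)
  then have "(\<Sum>j\<in>UNIV. (lagrange_matrix *v regf y)$j ^ 2 / intensity beta_star (design_point j))
     = (1 - t1 - t2 - t3 + t1*t2 + t1*t3 + t2*t3)^2
     + exp 2 * ((t1 - t1*t2 - t1*t3)^2 + (t2 - t1*t2 - t2*t3)^2 + (t3 - t1*t3 - t2*t3)^2)
     + exp 2 ^ 2 * ((t1*t2)^2 + (t1*t3)^2 + (t2*t3)^2)"
    by (simp add: sum_7 lagrange_matrix_regf intensity_beta_star design_point_simps
        t1_def t2_def t3_def algebra_simps)
  also have "\<dots> \<le> exp (2*t1) * exp (2*t2) * exp (2*t3)"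
    using assms by (intro lagrange_sum_le_exp) (auto simp: t1_def t2_def t3_def)
  also have "\<dots> = exp (y$1 + y$2 + y$3)"
    by (simp add: t1_def t2_def t3_def flip: exp_add)
  finally have "intensity beta_star y * (\<Sum>j\<in>UNIV. (lagrange_matrix *v regf y)$j ^ 2
           / intensity beta_star (design_point j)) \<le> intensity beta_star y * exp (y$1 + y$2 + y$3)"
    by (intro mult_left_mono) (simp_all add: intensity_def)
  also have "\<dots> = 1"
    by (simp add: intensity_beta_star flip: exp_add)
  finally show ?thesis .
qed

lemma info_matrix_eq_sum_outer:
  "info_matrix \<beta> S w = (\<Sum>x\<in>S. (w x * intensity \<beta> x) *\<^sub>R outer (regf x))"
  by (simp add: info_matrix_def outer_def)

lemma intensity_pos: "0 < intensity \<beta> x"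
  by (simp add: intensity_def)

theorem corollary1:
  shows "locally_D_optimal (vector [0, -1, -1, -1, 0, 0, 0])
           {x::real^3. \<forall>i. 0 \<le> x $ i}
           {vector [0,0,0], vector [2,0,0], vector [0,2,0], vector [0,0,2],
            vector [2,2,0], vector [2,0,2], vector [0,2,2]}
           (\<lambda>_. 1/7)"
proof -
  let ?X = "{x::real^3. \<forall>i. 0 \<le> x $ i}"
  have support: "range design_point \<subseteq> ?X"
    by (auto simp: forall_3 range_design_point)
  have "card (range design_point) = 7"
    using range_design_point by (simp add: vec_eq_iff forall_3)
  with support have "is_design ?X (range design_point) (\<lambda>_. 1/7)"
    by (simp add: is_design_def)
  moreover have "det (info_matrix beta_star S w) \<le> det (info_matrix beta_star (range design_point) (\<lambda>_. 1/7))"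
    if "is_design ?X S w" for S w
  proof -
    have "det (\<Sum>x\<in>S. (w x * intensity beta_star x) *\<^sub>R outer (regf x))
        \<le> det (\<Sum>x\<in>range design_point. (1 / CARD(7) * intensity beta_star x) *\<^sub>R outer (regf x))"
      using that lagrange_matrix_design_point support sensitivity_beta_star
      by (intro saturated_design_D_optimal[where X = ?X]) (auto simp: is_design_def intensity_pos)
    then show ?thesis by (simp add: info_matrix_eq_sum_outer)
  qed
  ultimately show ?thesis
    unfolding locally_D_optimal_def range_design_point beta_star_def by blast
qed

end
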